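(* Let $k\ge 3$, $K=\{1,\dots,k\}$, $T\subseteq K$ with $|T|=2$, and let $\bm v_1$ be a point of $PG(k-1,q)$ with $\mathrm{supp}(\bm v_1)\cap T=\emptyset$; set $\mathcal V=\{\bm v_1\}$ and $M=X^T\cup Y^T_{\mathcal V}\cup Z^T$. Let $C$ be the code over $\mathbb{F}_q$ with generator matrix $G$ whose columns are representing vectors of the points of $M$, one for each point. Then $C$ is an $[|M|,k]$ code with $d(C^\perp)=3$ and $\gamma(C)=k-1=k-d(C^\perp)+2$.
   Context: Points of $PG(k-1,q)$ are one-dimensional subspaces of $\mathbb{F}_q^k$, identified with any nonzero representing vector; the support $\mathrm{supp}(\bm x)=\{i:x_i\neq0\}$ of a point is well defined. $\bm e_i$ denotes the $i$-th standard unit vector of $\mathbb{F}_q^k$. Define $X^T=\{\bm x\in PG(k-1,q): \mathrm{supp}(\bm x)\cap T=\emptyset\}$; $Y^T_{\mathcal V}=\{\bm x\in PG(k-1,q): |\mathrm{supp}(\bm x)\cap T|=1\}$ minus all points represented by $\bm v_i+\lambda\bm e_j$ with $\bm v_i\in\mathcal V$, $j\in T$, $\lambda\in\mathbb{F}_q\setminus\{0\}$; $Z^T=\{\bm x\in PG(k-1,q): \mathrm{supp}(\bm x)\text{ is a 2-element subset of }T\}$. An $[n,k]$ code over $\mathbb{F}_q$ is a $k$-dimensional subspace $C\subseteq\mathbb{F}_q^n$; $E=\{1,\dots,n\}$; for $B\subseteq\mathbb{F}_q^n$, $\mathrm{Supp}(B)=\bigcup_{\bm x\in B}\mathrm{supp}(\bm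 x)$. $C^\perp$ is the dual code with respect to the standard inner product and $d(C^\perp)$ is the minimum weight (number of nonzero coordinates) of a nonzero codeword of $C^\perp$. The covering dimension is $\gamma(C)=\infty$ if $\mathrm{Supp}(C)\neq E$, and otherwise $\gamma(C)$ is the least positive integer $r$ such that $C$ has an $r$-dimensional subspace $D$ with $\mathrm{Supp}(D)=E$. *)

theory Defs
  imports Main "HOL-Library.Function_Algebras" "HOL-Library.Extended_Nat"
begin

text \<open>Vectors of F_q^m are functions nat => 'a vanishing outside the index set {1..m}.\<close>

definition fscale :: "'a::field \<Rightarrow> (nat \<Rightarrow> 'a) \<Rightarrow> (nat \<Rightarrow> 'a)" where
  "fscale c x = (\<lambda>i. c * x i)"

abbreviation fsubspace :: "(nat \<Rightarrow> 'a::field) set \<Rightarrow> bool" where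
  "fsubspace S \<equiv> module.subspace fscale S"

abbreviation fdim :: "(nat \<Rightarrow> 'a::field) set \<Rightarrow> nat" where
  "fdim S \<equiv> vector_space.dim fscale S"

definition vecs :: "nat \<Rightarrow> (nat \<Rightarrow> 'a::field) set" where
  "vecs m = {x. \<forall>i. i \<notin> {1..m} \<longrightarrow> x i = 0}"

definition supp :: "(nat \<Rightarrow> 'a::zero) \<Rightarrow> nat set" where
  "supp x = {i. x i \<noteq> 0}"

definition unitv :: "nat \<Rightarrow> nat \<Rightarrow> 'a::field" where
  "unitv j = (\<lambda>i. if i = j then 1 else 0)"

definition proj_point :: "(nat \<Rightarrow> 'a::field) \<Rightarrow> (nat \<Rightarrow> 'a) set" where
  "proj_point v = {fscale c v | c. c \<noteq> 0}"

definition PG :: "nat \<Rightarrow> (nat \<Rightarrow> 'a::field) set set" where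
  "PG k = {proj_point v | v. v \<in> vecs k \<and> v \<noteq> 0}"

text \<open>Support of a point (well defined, independent of the representative).\<close>
definition psupp :: "(nat \<Rightarrow> 'a::field) set \<Rightarrow> nat set" where
  "psupp P = supp (SOME v. v \<in> P)"

definition XT :: "nat \<Rightarrow> nat set \<Rightarrow> (nat \<Rightarrow> 'a::field) set set" where
  "XT k T = {P \<in> PG k. psupp P \<inter> T = {}}"

definition YT :: "nat \<Rightarrow> nat set \<Rightarrow> (nat \<Rightarrow> 'a::field) set set \<Rightarrow> (nat \<Rightarrow> 'a) set set" where
  "YT k T V = {P \<in> PG k. card (psupp P \<inter> T) = 1} -
     {proj_point (v + fscale c (unitv j)) | v j c. (\<exists>Q\<in>V. v \<in> Q) \<and> j \<in> T \<and> c \<noteq> 0}"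

definition ZT :: "nat \<Rightarrow> nat set \<Rightarrow> (nat \<Rightarrow> 'a::field) set set" where
  "ZT k T = {P \<in> PG k. psupp P \<subseteq> T \<and> card (psupp P) = 2}"

text \<open>Code generated by the k x n matrix whose j-th column is cols j.\<close>
definition gen_code :: "nat \<Rightarrow> nat \<Rightarrow> (nat \<Rightarrow> nat \<Rightarrow> 'a::field) \<Rightarrow> (nat \<Rightarrow> 'a) set" where
  "gen_code k n cols = {(\<lambda>j. if j \<in> {1..n} then (\<Sum>i\<in>{1..k}. u i * cols j i) else 0) | u. u \<in> vecs k}"

definition Supp :: "(nat \<Rightarrow> 'a::zero) set \<Rightarrow> nat set" where
  "Supp B = (\<Union>x\<in>B. supp x)"

definition dual_code :: "nat \<Rightarrow> (nat \<Rightarrow> 'a::field) set \<Rightarrow> (nat \<Rightarrow> 'a) set" where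
  "dual_code n C = {y \<in> vecs n. \<forall>x\<in>C. (\<Sum>i\<in>{1..n}. x i * y i) = 0}"

definition min_dist :: "(nat \<Rightarrow> 'a::zero) set \<Rightarrow> nat" where
  "min_dist C = Inf {card (supp x) | x. x \<in> C \<and> x \<noteq> 0}"

definition covdim :: "nat \<Rightarrow> (nat \<Rightarrow> 'a::field) set \<Rightarrow> enat" where
  "covdim n C = (if Supp C \<noteq> {1..n} then \<infinity>
     else enat (LEAST r. r > 0 \<and> (\<exists>D. fsubspace D \<and> D \<subseteq> C \<and> fdim D = r \<and> Supp D = {1..n})))"

end

theory Submission
  imports Defs
begin

text \<open>
  Every unit point lies in \<open>M\<close>, so \<open>u \<mapsto> u G\<close> is
  injective and \<open>dim C = k\<close>.  Dual codewords are linear relations among the columns: the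
  columns are nonzero and pairwise non-proportional, so such a relation involves at least three
  of them, and \<open>e\<^sub>a, e\<^sub>b, e\<^sub>a + e\<^sub>b\<close> (where \<open>T = {a, b}\<close>) give one with exactly three.

  A subspace \<open>D = U G\<close> of \<open>C\<close> covers all coordinates iff no column is orthogonal to \<open>U\<close>.
  If \<open>dim U \<le> k - 2\<close>, the annihilator of \<open>U\<close> contains a projective line, and every line
  meets \<open>M\<close>: its points with vanishing \<open>a\<close>- resp. \<open>b\<close>-coordinate lie in \<open>X \<union> Y\<close>, unless
  they have the form \<open>v\<^sub>1 + \<lambda> e\<^sub>b\<close> and \<open>v\<^sub>1 + \<mu> e\<^sub>a\<close>, in which case a combination of them has
  support exactly \<open>T\<close> and lies in \<open>Z\<close>.  Conversely, the hyperplane orthogonal to the point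
  \<open>v\<^sub>1 + e\<^sub>a \<notin> M\<close> gives a full-support subspace of dimension \<open>k - 1\<close>.
\<close>

section \<open>Coordinate vectors\<close>

interpretation vs: vector_space "fscale :: 'a::field \<Rightarrow> (nat \<Rightarrow> 'a) \<Rightarrow> _"
  by unfold_locales (auto simp: fscale_def fun_eq_iff algebra_simps)

lemma fscale_apply [simp]: "fscale c x i = c * x i"
  by (simp add: fscale_def)

lemma sum_fun_apply: "(\<Sum>v\<in>A. f v) (i::nat) = (\<Sum>v\<in>A. f v i)"
  by (induction A rule: infinite_finite_induct) auto

lemma fscale_eq_0_iff: "fscale c v = 0 \<longleftrightarrow> c = 0 \<or> v = 0"
  by (auto simp: fscale_def fun_eq_iff)

lemma supp_fscale [simp]: "c \<noteq> 0 \<Longrightarrow> supp (fscale c v) = supp v"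
  by (auto simp: supp_def)

lemma unitv_apply: "unitv j i = (if i = j then 1 else 0)"
  by (simp add: unitv_def)

lemma unitv_sym: "unitv i j = unitv j i"
  by (simp add: unitv_apply)

lemma supp_unitv [simp]: "supp (unitv j :: nat \<Rightarrow> 'a::field) = {j}"
  by (auto simp: supp_def unitv_apply)

lemma sum_mult_unitv:
  "finite A \<Longrightarrow> (\<Sum>i\<in>A. c i * unitv i j) = (if j \<in> A then c j else (0::'a::field))"
  by (simp add: unitv_apply if_distrib[of "(*) _"] cong: if_cong)

lemma unitv_in_vecs: "j \<in> {1..k} \<Longrightarrow> unitv j \<in> vecs k"
  by (auto simp: vecs_def unitv_apply)

lemma subspace_vecs: "vs.subspace (vecs k)"
  by (auto simp: vs.subspace_def vecs_def)

lemma add_in_vecs: "x \<in> vecs k \<Longrightarrow> y \<in> vecs k \<Longrightarrow> x + y \<in> vecs k"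
  by (simp add: vecs_def)

lemma supp_subset_vecs: "x \<in> vecs k \<Longrightarrow> supp x \<subseteq> {1..k}"
  by (auto simp: vecs_def supp_def)

lemma independent_diagonal:
  fixes f :: "nat \<Rightarrow> nat \<Rightarrow> 'a::field"
  assumes diag: "\<And>i. i \<in> I \<Longrightarrow> f i i \<noteq> 0"
    and off_diag: "\<And>i i'. i \<in> I \<Longrightarrow> i' \<in> I \<Longrightarrow> i' \<noteq> i \<Longrightarrow> f i' i = 0"
  shows "vs.independent (f ` I)" and "inj_on f I"
proof -
  show inj: "inj_on f I"
    by (rule inj_onI) (metis diag off_diag)
  show "vs.independent (f ` I)"
    unfolding vs.independent_explicit_module
  proof (intro allI impI)
    fix t u v assume t: "finite t" "t \<subseteq> f ` I" and zero: "(\<Sum>w\<in>t. fscale (u w) w) = 0"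
      and v: "v \<in> t"
    obtain i where i: "i \<in> I" "v = f i" using t v by auto
    have "0 = (\<Sum>w\<in>t. u w * w i)"
      using fun_cong[OF zero, of i] by (simp add: sum_fun_apply)
    also have "\<dots> = (\<Sum>w\<in>{v}. u w * w i)"
      using t v i off_diag by (intro sum.mono_neutral_right) auto
    finally show "u v = 0" using diag i by simp
  qed
qed

lemma independent_unitv: "vs.independent (unitv ` {1..k} :: (nat \<Rightarrow> 'a::field) set)"
  and inj_on_unitv: "inj_on (unitv :: nat \<Rightarrow> nat \<Rightarrow> 'a::field) {1..k}"
  by (rule independent_diagonal; simp add: unitv_apply)+

lemma span_unitv: "vs.span (unitv ` {1..k}) = (vecs k :: (nat \<Rightarrow> 'a::field) set)"
proof
  show "vs.span (unitv ` {1..k}) \<subseteq> (vecs k :: (nat \<Rightarrow> 'a) set)"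
    by (intro vs.span_minimal subspace_vecs) (auto simp: unitv_in_vecs)
  show "(vecs k :: (nat \<Rightarrow> 'a) set) \<subseteq> vs.span (unitv ` {1..k})"
  proof
    fix u :: "nat \<Rightarrow> 'a" assume u: "u \<in> vecs k"
    have "u = (\<Sum>i\<in>{1..k}. fscale (u i) (unitv i))"
      using u by (auto simp: fun_eq_iff sum_fun_apply sum_mult_unitv vecs_def)
    also have "\<dots> \<in> vs.span (unitv ` {1..k})"
      by (intro vs.span_sum vs.span_scale vs.span_base) auto
    finally show "u \<in> vs.span (unitv ` {1..k})" .
  qed
qed

lemma dim_vecs: "vs.dim (vecs k :: (nat \<Rightarrow> 'a::field) set) = k"
  using vs.dim_span_eq_card_independent[OF independent_unitv, of k]
  unfolding span_unitv card_image[OF inj_on_unitv] by simp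

lemma independent_pairD:
  assumes "vs.independent {x, y}" "x \<noteq> y" "fscale \<alpha> x + fscale \<beta> y = 0"
  shows "\<alpha> = 0 \<and> \<beta> = (0::'a::field)"
proof -
  define u where "u z = (if z = x then \<alpha> else \<beta>)" for z
  have u: "u x = \<alpha>" "u y = \<beta>"
    using assms(2) by (simp_all add: u_def)
  have "(\<Sum>z\<in>{x, y}. fscale (u z) z) = fscale (u x) x + fscale (u y) y"
    using assms(2) by (simp only: sum.insert_remove finite.emptyI finite.insertI) simp
  also have "\<dots> = 0"
    using assms(3) by (simp only: u)
  finally have sum_zero: "(\<Sum>z\<in>{x, y}. fscale (u z) z) = 0" .
  have "u z = 0" if "z \<in> {x, y}" for z
    using vs.independentD[OF assms(1) _ order_refl sum_zero that] by simp
  then show ?thesis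
    using u by simp
qed

lemma independent_pair_in_subspace:
  assumes A: "vs.subspace A" and dim: "2 \<le> vs.dim A"
  shows "\<exists>x y. x \<in> A \<and> y \<in> A \<and> x \<noteq> y \<and> vs.independent {x, y}"
proof -
  obtain B where B: "B \<subseteq> A" "vs.independent B" "card B = vs.dim A"
    by (rule vs.basis_exists)
  then have "finite B" "\<not> card B \<le> Suc 0"
    using dim card_gt_0_iff[of B] by auto
  then obtain x y where "x \<in> B" "y \<in> B" "x \<noteq> y"
    by (auto simp: card_le_Suc0_iff_eq)
  then show ?thesis
    using B vs.independent_mono[OF B(2), of "{x, y}"] by blast
qed

lemma span_vanishing_coordinate:
  assumes "\<And>b. b \<in> B \<Longrightarrow> b j = 0" "d \<in> vs.span B"
  shows "d j = 0"
proof -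
  have "vs.subspace {d. d j = (0::'a::field)}"
    by (simp add: vs.subspace_def)
  then show ?thesis
    using vs.span_minimal[of B "{d. d j = 0}"] assms by blast
qed

lemma exists_zero_coordinate_in_span_pair:
  assumes "vs.independent {x, y}" "x \<noteq> y"
  shows "\<exists>z\<in>vs.span {x, y}. z \<noteq> 0 \<and> z i = (0::'a::field)"
proof -
  obtain \<alpha> \<beta> where \<alpha>\<beta>: "\<alpha> \<noteq> 0 \<or> \<beta> \<noteq> 0" "\<alpha> * x i + \<beta> * y i = 0"
  proof (cases "x i = 0")
    case True then show ?thesis using that[of 1 0] by simp
  next
    case False then show ?thesis using that[of "- y i" "x i"] by (simp add: mult.commute)
  qed
  have "fscale \<alpha> x + fscale \<beta> y \<in> vs.span {x, y}"
    by (intro vs.span_add vs.span_scale vs.span_base) auto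
  moreover have "fscale \<alpha> x + fscale \<beta> y \<noteq> 0"
    using independent_pairD[OF assms] \<alpha>\<beta>(1) by blast
  ultimately show ?thesis
    using \<alpha>\<beta>(2) by (intro bexI[of _ "fscale \<alpha> x + fscale \<beta> y"]) auto
qed

section \<open>The standard bilinear form and annihilators\<close>

definition dot :: "nat \<Rightarrow> (nat \<Rightarrow> 'a::field) \<Rightarrow> (nat \<Rightarrow> 'a) \<Rightarrow> 'a" where
  "dot k s x = (\<Sum>i\<in>{1..k}. s i * x i)"

lemma dot_fscale_right [simp]: "dot k s (fscale c x) = c * dot k s x"
  and dot_add_right [simp]: "dot k s (x + y) = dot k s x + dot k s y"
  and dot_diff_right [simp]: "dot k s (x - y) = dot k s x - dot k s y"
  by (simp_all add: dot_def algebra_simps sum.distrib sum_subtractf sum_distrib_left)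

lemma dot_commute: "dot k s x = dot k x s"
  by (simp add: dot_def mult.commute)

lemma dot_zero_right [simp]: "dot k s 0 = 0"
  by (simp add: dot_def)

lemma dot_sum_right: "dot k s (\<Sum>j\<in>J. f j) = (\<Sum>j\<in>J. dot k s (f j))"
  unfolding dot_def sum_fun_apply sum_distrib_left by (rule sum.swap)

lemma dot_unitv_left: "i \<in> {1..k} \<Longrightarrow> dot k (unitv i) x = x i"
  and dot_unitv_right: "i \<in> {1..k} \<Longrightarrow> dot k s (unitv i) = s i"
  using sum_mult_unitv[of "{1..k}" x i] sum_mult_unitv[of "{1..k}" s i]
  by (simp_all add: dot_def mult.commute unitv_sym)

definition annihilator :: "nat \<Rightarrow> (nat \<Rightarrow> 'a::field) set \<Rightarrow> (nat \<Rightarrow> 'a) set" where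
  "annihilator k S = {u \<in> vecs k. \<forall>s\<in>S. dot k s u = 0}"

lemma subspace_annihilator: "vs.subspace (annihilator k S)"
  by (auto simp: vs.subspace_def annihilator_def vecs_def)

lemma annihilator_insert:
  "annihilator k (insert s S) = {u \<in> annihilator k S. dot k s u = 0}"
  by (auto simp: annihilator_def)

lemma dim_le_Suc_dim_hyperplane_section:
  assumes W: "vs.subspace W" "W \<subseteq> vecs k"
  shows "vs.dim W \<le> Suc (vs.dim {w \<in> W. dot k s w = 0})"
proof (cases "\<forall>w\<in>W. dot k s w = 0")
  case True
  then have "{w \<in> W. dot k s w = 0} = W" by blast
  then show ?thesis by simp
next
  case False
  then obtain x0 where x0: "x0 \<in> W" "dot k s x0 \<noteq> 0" by blast
  let ?H = "{w \<in> W. dot k s w = 0}"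
  obtain B where B: "B \<subseteq> ?H" "vs.independent B" "?H \<subseteq> vs.span B" "card B = vs.dim ?H"
    by (rule vs.basis_exists)
  have "B \<subseteq> vs.span (unitv ` {1..k})"
    unfolding span_unitv using B(1) W(2) by auto
  then have fin: "finite B"
    using vs.independent_span_bound[OF _ B(2)] by blast
  have "W \<subseteq> vs.span (insert x0 B)"
  proof
    fix w assume w: "w \<in> W"
    define t where "t = dot k s w / dot k s x0"
    have "w - fscale t x0 \<in> ?H"
      using w x0 W(1) by (simp add: t_def vs.subspace_diff vs.subspace_scale)
    then have "w - fscale t x0 \<in> vs.span (insert x0 B)"
      using B(3) vs.span_mono[of B "insert x0 B"] by blast
    moreover have "fscale t x0 \<in> vs.span (insert x0 B)"
      by (intro vs.span_scale vs.span_base) simp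
    ultimately have "(w - fscale t x0) + fscale t x0 \<in> vs.span (insert x0 B)"
      by (rule vs.span_add)
    then show "w \<in> vs.span (insert x0 B)" by simp
  qed
  then have "vs.dim W \<le> card (insert x0 B)"
    using fin by (intro vs.dim_le_card) simp_all
  also have "\<dots> \<le> Suc (card B)"
    using fin by (simp add: card_insert_if)
  finally show ?thesis using B(4) by simp
qed

lemma dim_annihilator:
  assumes "finite S"
  shows "k - card S \<le> vs.dim (annihilator k S :: (nat \<Rightarrow> 'a::field) set)"
proof (rule finite_induct[OF assms])
  have "annihilator k {} = (vecs k :: (nat \<Rightarrow> 'a) set)" by (simp add: annihilator_def)
  then show "k - card {} \<le> vs.dim (annihilator k {} :: (nat \<Rightarrow> 'a) set)"
    by (simp add: dim_vecs)
next
  fix s and S :: "(nat \<Rightarrow> 'a) set"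
  assume S: "finite S" "s \<notin> S" and IH: "k - card S \<le> vs.dim (annihilator k S)"
  have "vs.dim (annihilator k S) \<le> Suc (vs.dim (annihilator k (insert s S)))"
    unfolding annihilator_insert
    by (rule dim_le_Suc_dim_hyperplane_section[OF subspace_annihilator])
      (auto simp: annihilator_def)
  then show "k - card (insert s S) \<le> vs.dim (annihilator k (insert s S))"
    using S IH by simp
qed

section \<open>Projective points\<close>

lemma mem_proj_point_iff: "p \<in> proj_point v \<longleftrightarrow> (\<exists>c. c \<noteq> 0 \<and> p = fscale c v)"
  by (auto simp: proj_point_def)

lemma proj_point_self: "v \<in> proj_point v"
  by (auto simp: mem_proj_point_iff intro: exI[of _ 1] simp: fscale_def)

lemma proj_point_eq:
  assumes "p \<in> proj_point v"
  shows "proj_point p = proj_point v"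
proof -
  obtain c where c: "c \<noteq> 0" "p = fscale c v"
    using assms by (auto simp: mem_proj_point_iff)
  have "fscale d p = fscale (d * c) v" "fscale d v = fscale (d / c) p" for d
    using c by (auto simp: fscale_def fun_eq_iff)
  moreover have "d * c \<noteq> 0" "d / c \<noteq> 0" if "d \<noteq> 0" for d
    using c that by auto
  ultimately show ?thesis
    unfolding proj_point_def by blast
qed

lemma psupp_proj_point: "psupp (proj_point v) = supp (v :: nat \<Rightarrow> 'a::field)"
proof -
  have "(SOME x. x \<in> proj_point v) \<in> proj_point v"
    by (rule someI[of _ v]) (rule proj_point_self)
  then show ?thesis
    by (auto simp: psupp_def mem_proj_point_iff)
qed

lemma proj_point_in_PG: "v \<in> vecs k \<Longrightarrow> v \<noteq> 0 \<Longrightarrow> proj_point v \<in> PG k"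
  by (auto simp: PG_def)

lemma PG_memE:
  assumes "P \<in> PG k" "p \<in> P"
  shows "p \<in> vecs k" "p \<noteq> 0" "P = proj_point p"
proof -
  obtain v where v: "P = proj_point v" "v \<in> vecs k" "v \<noteq> 0"
    using assms(1) by (auto simp: PG_def)
  then obtain c where "c \<noteq> 0" "p = fscale c v"
    using assms(2) by (auto simp: mem_proj_point_iff)
  then show "p \<in> vecs k" "p \<noteq> 0"
    using v by (auto simp: vecs_def fscale_eq_0_iff)
  show "P = proj_point p"
    using v assms(2) proj_point_eq by metis
qed

lemma exists_coordinate_off_point:
  assumes p: "p \<in> vecs k" "p \<noteq> 0" "p \<notin> proj_point w" and w: "w \<in> vecs k" "w a = 1"
  shows "\<exists>i\<in>{1..k} - {a}. p i \<noteq> w i * p a"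
proof (rule ccontr)
  assume "\<not> ?thesis"
  then have p_coord: "p i = w i * p a" for i
    using p w by (cases "i \<in> {1..k} - {a}") (auto simp: vecs_def)
  have "p = fscale (p a) w"
    by (rule ext) (metis p_coord fscale_apply mult.commute)
  moreover have "p a \<noteq> 0"
    using p(2) calculation by (auto simp: fscale_eq_0_iff)
  ultimately show False
    using p(3) by (auto simp: mem_proj_point_iff)
qed

section \<open>Codes whose columns represent projective points\<close>

locale projective_code =
  fixes k n :: nat and cols :: "nat \<Rightarrow> nat \<Rightarrow> 'a::field"
  assumes cols_in_vecs: "j \<in> {1..n} \<Longrightarrow> cols j \<in> vecs k"
    and cols_nonzero: "j \<in> {1..n} \<Longrightarrow> cols j \<noteq> 0"
begin

definition encode :: "(nat \<Rightarrow> 'a) \<Rightarrow> nat \<Rightarrow> 'a" where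
  "encode u = (\<lambda>j. if j \<in> {1..n} then dot k u (cols j) else 0)"

definition is_column :: "(nat \<Rightarrow> 'a) \<Rightarrow> bool" where
  "is_column v \<longleftrightarrow> (\<exists>j\<in>{1..n}. cols j \<in> proj_point v)"

lemma gen_code_eq: "gen_code k n cols = encode ` vecs k"
  unfolding gen_code_def encode_def dot_def by blast

lemma encode_apply: "j \<in> {1..n} \<Longrightarrow> encode u j = dot k u (cols j)"
  by (simp add: encode_def)

lemma encode_column:
  "j \<in> {1..n} \<Longrightarrow> cols j = fscale c v \<Longrightarrow> encode u j = c * dot k u v"
  by (simp add: encode_def dot_def sum_distrib_left algebra_simps)

lemma is_column_iff:
  assumes enum: "bij_betw enum {1..n} M" and cols_enum: "\<And>j. j \<in> {1..n} \<Longrightarrow> cols j \<in> enum j"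
    and M: "M \<subseteq> PG k"
  shows "is_column v \<longleftrightarrow> proj_point v \<in> M"
proof
  assume "is_column v"
  then obtain j where j: "j \<in> {1..n}" "cols j \<in> proj_point v"
    by (auto simp: is_column_def)
  have "enum j \<in> M"
    using enum j(1) by (auto simp: bij_betw_def)
  then have "enum j = proj_point (cols j)"
    using M by (intro PG_memE(3)[OF _ cols_enum[OF j(1)]]) blast
  then show "proj_point v \<in> M"
    using \<open>enum j \<in> M\<close> proj_point_eq[OF j(2)] by simp
next
  assume "proj_point v \<in> M"
  then obtain j where j: "j \<in> {1..n}" "enum j = proj_point v"
    using enum by (auto simp: bij_betw_def)
  then show "is_column v"
    using cols_enum[OF j(1)] unfolding is_column_def by auto
qed

lemma linear_encode: "Vector_Spaces.linear fscale fscale encode"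
  by unfold_locales
    (auto simp: encode_def dot_def fun_eq_iff algebra_simps sum.distrib sum_distrib_left)

interpretation encode: Vector_Spaces.linear fscale fscale encode
  by (rule linear_encode)

lemma subspace_code: "vs.subspace (encode ` vecs k)"
  by (rule encode.subspace_image[OF subspace_vecs])

lemma code_subset_vecs: "encode ` vecs k \<subseteq> vecs n"
  by (auto simp: encode_def vecs_def)

lemma Supp_subset: "D \<subseteq> encode ` vecs k \<Longrightarrow> Supp D \<subseteq> {1..n}"
  using code_subset_vecs supp_subset_vecs by (fastforce simp: Supp_def)

lemma Supp_code: "Supp (encode ` vecs k) = {1..n}"
proof
  show "{1..n} \<subseteq> Supp (encode ` vecs k)"
  proof
    fix j assume j: "j \<in> {1..n}"
    obtain i where i: "cols j i \<noteq> 0"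
      using cols_nonzero[OF j] by (auto simp: fun_eq_iff)
    then have "i \<in> {1..k}"
      using cols_in_vecs[OF j] by (auto simp: vecs_def)
    then have "encode (unitv i) j \<noteq> 0" "unitv i \<in> vecs k"
      using i j by (simp_all add: encode_apply dot_unitv_left unitv_in_vecs)
    then show "j \<in> Supp (encode ` vecs k)"
      by (auto simp: Supp_def supp_def)
  qed
qed (rule Supp_subset[OF order_refl])

lemma inj_on_encode:
  assumes "\<And>i. i \<in> {1..k} \<Longrightarrow> is_column (unitv i)"
  shows "inj_on encode (vecs k)"
proof -
  have "u = 0" if u: "u \<in> vecs k" "encode u = 0" for u
  proof
    fix i show "u i = 0 i"
    proof (cases "i \<in> {1..k}")
      case True
      then obtain j c where "j \<in> {1..n}" "c \<noteq> 0" "cols j = fscale c (unitv i)"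
        using assms[OF True] by (auto simp: is_column_def mem_proj_point_iff)
      then show ?thesis
        using u True encode_column[of j c "unitv i" u] by (simp add: dot_unitv_right)
    qed (use u in \<open>simp add: vecs_def\<close>)
  qed
  then show ?thesis
    using encode.inj_on_iff_eq_0[OF subspace_vecs] by blast
qed

lemma dim_encode_span:
  assumes inj: "inj_on encode (vecs k)" and B: "B \<subseteq> vecs k" "vs.independent B"
  shows "vs.dim (encode ` vs.span B) = card B"
proof -
  have inj_span: "inj_on encode (vs.span B)"
    using inj vs.span_minimal[OF B(1) subspace_vecs] by (rule inj_on_subset)
  show ?thesis
  proof (rule vs.dim_unique[of "encode ` B"])
    show "encode ` B \<subseteq> encode ` vs.span B"
      by (rule image_mono[OF vs.span_superset])
    show "encode ` vs.span B \<subseteq> vs.span (encode ` B)"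
      by (simp add: encode.span_image)
    show "vs.independent (encode ` B)"
      by (rule encode.independent_injective_image[OF B(2) inj_span])
    show "card (encode ` B) = card B"
      by (rule card_image[OF inj_on_subset[OF inj_span vs.span_superset]])
  qed
qed

lemma dim_code:
  assumes "inj_on encode (vecs k)"
  shows "vs.dim (encode ` vecs k) = k"
proof -
  have "unitv ` {1..k} \<subseteq> vecs k" by (auto simp: unitv_in_vecs)
  from dim_encode_span[OF assms this independent_unitv] show ?thesis
    unfolding span_unitv card_image[OF inj_on_unitv] by simp
qed

lemma dual_code_iff:
  assumes "y \<in> vecs n"
  shows "y \<in> dual_code n (encode ` vecs k) \<longleftrightarrow> (\<Sum>j\<in>{1..n}. fscale (y j) (cols j)) = 0"
proof
  assume "y \<in> dual_code n (encode ` vecs k)"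
  then have orth: "(\<Sum>j\<in>{1..n}. encode u j * y j) = 0" if "u \<in> vecs k" for u
    using that by (auto simp: dual_code_def)
  show "(\<Sum>j\<in>{1..n}. fscale (y j) (cols j)) = 0"
  proof
    fix i
    show "(\<Sum>j\<in>{1..n}. fscale (y j) (cols j)) i = 0 i"
    proof (cases "i \<in> {1..k}")
      case True
      have "(\<Sum>j\<in>{1..n}. fscale (y j) (cols j)) i = (\<Sum>j\<in>{1..n}. encode (unitv i) j * y j)"
        using True by (auto simp: sum_fun_apply encode_apply dot_unitv_left intro: sum.cong)
      then show ?thesis
        using orth[OF unitv_in_vecs[OF True]] by simp
    next
      case False
      then show ?thesis
        using cols_in_vecs by (simp add: sum_fun_apply vecs_def)
    qed
  qed
next
  assume dep: "(\<Sum>j\<in>{1..n}. fscale (y j) (cols j)) = 0"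
  have "(\<Sum>j\<in>{1..n}. encode u j * y j) = dot k u (\<Sum>j\<in>{1..n}. fscale (y j) (cols j))" for u
    by (simp add: dot_sum_right encode_apply mult.commute)
  then show "y \<in> dual_code n (encode ` vecs k)"
    using assms dep by (auto simp: dual_code_def)
qed

lemma dual_codeword_relation:
  assumes "y \<in> dual_code n (encode ` vecs k)"
  shows "supp y \<subseteq> {1..n}" and "(\<Sum>j\<in>supp y. fscale (y j) (cols j)) = 0"
proof -
  have yv: "y \<in> vecs n" using assms by (simp add: dual_code_def)
  then show supp: "supp y \<subseteq> {1..n}" by (rule supp_subset_vecs)
  have "(\<Sum>j\<in>supp y. fscale (y j) (cols j)) = (\<Sum>j\<in>{1..n}. fscale (y j) (cols j))"
    using supp by (intro sum.mono_neutral_left) (auto simp: supp_def fscale_eq_0_iff)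
  also have "\<dots> = 0"
    using assms dual_code_iff[OF yv] by simp
  finally show "(\<Sum>j\<in>supp y. fscale (y j) (cols j)) = 0" .
qed

lemma dual_weight_ge_3:
  assumes distinct: "inj_on (\<lambda>j. proj_point (cols j)) {1..n}"
    and y: "y \<in> dual_code n (encode ` vecs k)" "y \<noteq> 0"
  shows "3 \<le> card (supp y)"
proof -
  note supp = dual_codeword_relation(1)[OF y(1)] and dep = dual_codeword_relation(2)[OF y(1)]
  have "finite (supp y)"
    using supp finite_subset by blast
  moreover have "supp y \<noteq> {}"
    using y(2) by (auto simp: supp_def fun_eq_iff)
  ultimately have "card (supp y) \<noteq> 0"
    by simp
  moreover have "card (supp y) \<noteq> 1"
  proof
    assume "card (supp y) = 1"
    then obtain j where j: "supp y = {j}" by (rule card_1_singletonE)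
    then have "fscale (y j) (cols j) = 0" "y j \<noteq> 0" "j \<in> {1..n}"
      using dep supp by (auto simp: supp_def)
    then show False using cols_nonzero by (simp add: fscale_eq_0_iff)
  qed
  moreover have "card (supp y) \<noteq> 2"
  proof
    assume "card (supp y) = 2"
    then obtain j l where jl: "supp y = {j, l}" "j \<noteq> l" by (auto simp: card_2_iff)
    then have y_jl: "y j \<noteq> 0" "y l \<noteq> 0" "j \<in> {1..n}" "l \<in> {1..n}"
      using supp by (auto simp: supp_def)
    have "fscale (y j) (cols j) + fscale (y l) (cols l) = 0"
      using dep jl by simp
    then have "cols j = fscale (- y l / y j) (cols l)"
      using y_jl by (auto simp: fun_eq_iff field_simps add_eq_0_iff)
    moreover have "- y l / y j \<noteq> 0"
      using y_jl by simp
    ultimately have "proj_point (cols j) = proj_point (cols l)"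
      by (metis proj_point_eq mem_proj_point_iff)
    then show False
      using inj_onD[OF distinct _ y_jl(3,4)] jl(2) by simp
  qed
  ultimately show ?thesis
    by linarith
qed

lemma dual_weight_3:
  assumes j: "j1 \<in> {1..n}" "j2 \<in> {1..n}" "j3 \<in> {1..n}"
    and distinct: "j1 \<noteq> j2" "j1 \<noteq> j3" "j2 \<noteq> j3"
    and cols: "cols j1 \<in> proj_point u" "cols j2 \<in> proj_point v" "cols j3 \<in> proj_point (u + v)"
  shows "\<exists>y\<in>dual_code n (encode ` vecs k). y \<noteq> 0 \<and> card (supp y) = 3"
proof -
  obtain c1 c2 c3 where c: "c1 \<noteq> 0" "c2 \<noteq> 0" "c3 \<noteq> 0"
    and c_cols: "cols j1 = fscale c1 u" "cols j2 = fscale c2 v" "cols j3 = fscale c3 (u + v)"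
    using cols by (auto simp: mem_proj_point_iff)
  \<comment> \<open>The relation \<open>u + v - (u + v) = 0\<close> among the three columns.\<close>
  define y where "y j = (if j = j1 then 1 / c1 else if j = j2 then 1 / c2
    else if j = j3 then - 1 / c3 else 0)" for j
  have supp_y: "supp y = {j1, j2, j3}"
    using distinct c by (auto simp: supp_def y_def)
  have yv: "y \<in> vecs n"
    using j by (auto simp: vecs_def y_def)
  have "(\<Sum>j\<in>{1..n}. fscale (y j) (cols j)) = (\<Sum>j\<in>{j1, j2, j3}. fscale (y j) (cols j))"
    using j by (intro sum.mono_neutral_right) (auto simp: y_def)
  also have "\<dots> = 0"
    using distinct c c_cols by (simp add: y_def fun_eq_iff field_simps)
  finally have "y \<in> dual_code n (encode ` vecs k)"
    using dual_code_iff[OF yv] by simp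
  moreover have "y \<noteq> 0" "card (supp y) = 3"
    using supp_y distinct by (auto simp: supp_def)
  ultimately show ?thesis by blast
qed

lemma covering_subspace_exists:
  assumes inj: "inj_on encode (vecs k)" and a: "a \<in> {1..k}"
    and w: "w \<in> vecs k" "w a = 1" "\<not> is_column w"
  shows "\<exists>D. vs.subspace D \<and> D \<subseteq> encode ` vecs k \<and> vs.dim D = k - 1 \<and> Supp D = {1..n}"
proof -
  \<comment> \<open>\<open>D\<close> is the image of the hyperplane orthogonal to \<open>w\<close>, which is spanned by the \<open>f i\<close>.\<close>
  define f where "f i = unitv i - fscale (w i) (unitv a)" for i
  define I where "I = {1..k} - {a}"
  have "vs.independent (f ` I)" "inj_on f I"
    by (rule independent_diagonal; simp add: f_def I_def unitv_apply)+
  moreover have fI: "f ` I \<subseteq> vecs k"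
    using a by (auto simp: f_def I_def vecs_def unitv_apply)
  ultimately have dim: "vs.dim (encode ` vs.span (f ` I)) = k - 1"
    using dim_encode_span[OF inj] a by (simp add: card_image I_def)
  have span: "vs.span (f ` I) \<subseteq> vecs k"
    by (rule vs.span_minimal[OF fI subspace_vecs])
  have "{1..n} \<subseteq> Supp (encode ` vs.span (f ` I))"
  proof
    fix j assume j: "j \<in> {1..n}"
    let ?p = "cols j"
    have "?p \<notin> proj_point w"
      using w(3) j by (auto simp: is_column_def)
    then have "\<exists>i\<in>I. ?p i \<noteq> w i * ?p a"
      unfolding I_def
      by (rule exists_coordinate_off_point[OF cols_in_vecs[OF j] cols_nonzero[OF j] _ w(1,2)])
    then obtain i where i: "i \<in> I" "?p i \<noteq> w i * ?p a" by blast
    have "encode (f i) j = ?p i - w i * ?p a"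
      using i(1) a j by (simp add: f_def I_def encode_apply dot_commute[of k _ ?p] dot_unitv_right)
    moreover have "f i \<in> vs.span (f ` I)"
      using i by (intro vs.span_base) simp
    ultimately show "j \<in> Supp (encode ` vs.span (f ` I))"
      using i(2) unfolding Supp_def supp_def by force
  qed
  moreover have sub: "encode ` vs.span (f ` I) \<subseteq> encode ` vecs k"
    using span by (rule image_mono)
  ultimately have "Supp (encode ` vs.span (f ` I)) = {1..n}"
    using Supp_subset[OF sub] by blast
  moreover have "vs.subspace (encode ` vs.span (f ` I))"
    by (rule encode.subspace_image[OF vs.subspace_span])
  ultimately show ?thesis
    using dim sub by blast
qed

lemma covering_dim_lower_bound:
  assumes lines: "\<And>x y. x \<in> vecs k \<Longrightarrow> y \<in> vecs k \<Longrightarrow> x \<noteq> y \<Longrightarrow> vs.independent {x, y}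
      \<Longrightarrow> \<exists>p\<in>vs.span {x, y}. p \<noteq> 0 \<and> is_column p"
    and D: "vs.subspace D" "D \<subseteq> encode ` vecs k" "Supp D = {1..n}" "0 < vs.dim D"
  shows "k - 1 \<le> vs.dim D"
proof (rule ccontr)
  assume "\<not> k - 1 \<le> vs.dim D"
  obtain B where B: "B \<subseteq> D" "vs.independent B" "D \<subseteq> vs.span B" "card B = vs.dim D"
    by (rule vs.basis_exists)
  define pre where "pre = inv_into (vecs k) encode"
  have pre: "pre b \<in> vecs k" "encode (pre b) = b" if "b \<in> B" for b
    using that B(1) D(2) by (auto simp: pre_def inv_into_into f_inv_into_f)
  \<comment> \<open>The annihilator of the preimage of \<open>D\<close> has dimension at least 2, so it contains
    a line, and a column on that line is a coordinate where \<open>D\<close> vanishes.\<close>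
  let ?A = "annihilator k (pre ` B)"
  have "finite B" using B(4) D(4) card_gt_0_iff by force
  then have "k - card (pre ` B) \<le> vs.dim ?A" "card (pre ` B) \<le> card B"
    by (simp_all add: dim_annihilator card_image_le)
  then have "2 \<le> vs.dim ?A"
    using \<open>\<not> k - 1 \<le> vs.dim D\<close> B(4) by linarith
  then obtain x y where xy: "x \<in> ?A" "y \<in> ?A" "x \<noteq> y" "vs.independent {x, y}"
    using independent_pair_in_subspace[OF subspace_annihilator] by blast
  moreover have "x \<in> vecs k" "y \<in> vecs k"
    using xy by (simp_all add: annihilator_def)
  ultimately obtain p where p: "p \<in> vs.span {x, y}" "is_column p"
    using lines by blast
  then obtain j c where j: "j \<in> {1..n}" "cols j = fscale c p"
    unfolding is_column_def mem_proj_point_iff by blast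
  have "p \<in> ?A"
    using p(1) xy vs.span_minimal[OF _ subspace_annihilator, of "{x, y}"] by blast
  have "b j = 0" if "b \<in> B" for b
  proof -
    have "dot k (pre b) p = 0"
      using \<open>p \<in> ?A\<close> that by (simp add: annihilator_def)
    then show ?thesis
      using encode_column[OF j, of "pre b"] pre(2)[OF that] by simp
  qed
  then have "d j = 0" if "d \<in> D" for d
    using that B(3) by (intro span_vanishing_coordinate[of B j d]) auto
  moreover have "j \<in> Supp D"
    using D(3) j(1) by simp
  ultimately show False
    unfolding Supp_def supp_def by blast
qed

lemma min_dist_dual_eq_3:
  assumes distinct: "inj_on (\<lambda>j. proj_point (cols j)) {1..n}"
    and ab: "a \<in> {1..k}" "b \<in> {1..k}" "a \<noteq> b"
    and cols: "is_column (unitv a)" "is_column (unitv b)" "is_column (unitv a + unitv b)"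
  shows "min_dist (dual_code n (encode ` vecs k)) = 3"
proof -
  obtain j1 j2 j3 where j: "j1 \<in> {1..n}" "j2 \<in> {1..n}" "j3 \<in> {1..n}"
    and col: "cols j1 \<in> proj_point (unitv a)" "cols j2 \<in> proj_point (unitv b)"
      "cols j3 \<in> proj_point (unitv a + unitv b)"
    using cols by (auto simp: is_column_def)
  \<comment> \<open>The three columns have different supports, so they are different columns.\<close>
  have "supp (unitv a + unitv b :: nat \<Rightarrow> 'a) = {a, b}"
    using ab(3) by (auto simp: supp_def unitv_apply split: if_splits)
  moreover obtain c1 c2 c3 where "c1 \<noteq> 0" "c2 \<noteq> 0" "c3 \<noteq> 0" "cols j1 = fscale c1 (unitv a)"
    "cols j2 = fscale c2 (unitv b)" "cols j3 = fscale c3 (unitv a + unitv b)"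
    using col unfolding mem_proj_point_iff by blast
  ultimately have "supp (cols j1) = {a}" "supp (cols j2) = {b}" "supp (cols j3) = {a, b}"
    by simp_all
  moreover have "{a} \<noteq> {b}" "{a} \<noteq> {a, b}" "{b} \<noteq> {a, b}"
    using ab(3) by auto
  ultimately have "j1 \<noteq> j2" "j1 \<noteq> j3" "j2 \<noteq> j3"
    by metis+
  then obtain y where y: "y \<in> dual_code n (encode ` vecs k)" "y \<noteq> 0" "card (supp y) = 3"
    using dual_weight_3[OF j _ _ _ col] by blast
  show ?thesis
    unfolding min_dist_def
  proof (rule cInf_eq_minimum)
    show "3 \<in> {card (supp x) |x. x \<in> dual_code n (encode ` vecs k) \<and> x \<noteq> 0}"
      using y by force
  next
    fix m assume "m \<in> {card (supp x) |x. x \<in> dual_code n (encode ` vecs k) \<and> x \<noteq> 0}"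
    then show "3 \<le> m"
      using dual_weight_ge_3[OF distinct] by blast
  qed
qed

lemma covdim_eq:
  assumes inj: "inj_on encode (vecs k)" and k: "2 \<le> k"
    and lines: "\<And>x y. x \<in> vecs k \<Longrightarrow> y \<in> vecs k \<Longrightarrow> x \<noteq> y \<Longrightarrow> vs.independent {x, y}
      \<Longrightarrow> \<exists>p\<in>vs.span {x, y}. p \<noteq> 0 \<and> is_column p"
    and w: "a \<in> {1..k}" "w \<in> vecs k" "w a = 1" "\<not> is_column w"
  shows "covdim n (encode ` vecs k) = enat (k - 1)"
proof -
  have "(LEAST r. r > 0 \<and> (\<exists>D. vs.subspace D \<and> D \<subseteq> encode ` vecs k \<and> vs.dim D = r
      \<and> Supp D = {1..n})) = k - 1"
  proof (rule Least_equality)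
    show "k - 1 > 0 \<and> (\<exists>D. vs.subspace D \<and> D \<subseteq> encode ` vecs k \<and> vs.dim D = k - 1
        \<and> Supp D = {1..n})"
      using covering_subspace_exists[OF inj w] k by simp
  next
    fix r
    assume "r > 0 \<and> (\<exists>D. vs.subspace D \<and> D \<subseteq> encode ` vecs k \<and> vs.dim D = r
      \<and> Supp D = {1..n})"
    then obtain D where "r > 0" "vs.subspace D" "D \<subseteq> encode ` vecs k" "vs.dim D = r"
      "Supp D = {1..n}"
      by blast
    then show "k - 1 \<le> r"
      using covering_dim_lower_bound[OF lines, of D] by simp
  qed
  then show ?thesis
    by (simp add: covdim_def Supp_code)
qed

end

section \<open>The point set \<open>M = X \<union> Y \<union> Z\<close>\<close>

locale xyz_construction =
  fixes k a b :: nat and v0 :: "nat \<Rightarrow> 'a::field"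
  assumes a: "a \<in> {1..k}" and b: "b \<in> {1..k}" and a_ne_b: "a \<noteq> b"
    and v0: "v0 \<in> vecs k" "v0 \<noteq> 0" "v0 a = 0" "v0 b = 0"
begin

definition M :: "(nat \<Rightarrow> 'a) set set" where
  "M = XT k {a, b} \<union> YT k {a, b} {proj_point v0} \<union> ZT k {a, b}"

text \<open>The points removed from \<open>Y\<close>: those on the line through \<open>v0\<close> and \<open>unitv j\<close>, other
  than \<open>v0\<close> and \<open>unitv j\<close> themselves.\<close>
definition on_v0_line :: "nat \<Rightarrow> (nat \<Rightarrow> 'a) \<Rightarrow> bool" where
  "on_v0_line j p \<longleftrightarrow> (\<exists>d c. d \<noteq> 0 \<and> c \<noteq> 0 \<and> p = fscale d (v0 + fscale c (unitv j)))"

lemma M_subset_PG: "M \<subseteq> PG k"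
  by (auto simp: M_def XT_def YT_def ZT_def)

lemma v0_outside: obtains l where "v0 l \<noteq> 0" "l \<noteq> a" "l \<noteq> b"
  using v0 by (auto simp: fun_eq_iff)

lemma in_M_if_zero_on_ab:
  "p \<in> vecs k \<Longrightarrow> p \<noteq> 0 \<Longrightarrow> p a = 0 \<Longrightarrow> p b = 0 \<Longrightarrow> proj_point p \<in> M"
  by (auto simp: M_def XT_def psupp_proj_point proj_point_in_PG supp_def)

lemma in_M_if_supp_ab:
  "p \<in> vecs k \<Longrightarrow> supp p = {a, b} \<Longrightarrow> proj_point p \<in> M"
  using a_ne_b by (auto simp: M_def ZT_def psupp_proj_point supp_def intro!: proj_point_in_PG)

lemma in_YT_if_not_on_v0_line:
  assumes p: "p \<in> vecs k" "p \<noteq> 0" "supp p \<inter> {a, b} = {j}" and not_on_line: "\<not> on_v0_line j p"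
  shows "proj_point p \<in> YT k {a, b} {proj_point v0}"
  unfolding YT_def
proof (intro DiffI CollectI conjI notI)
  show "proj_point p \<in> PG k" by (rule proj_point_in_PG[OF p(1,2)])
  show "card (psupp (proj_point p) \<inter> {a, b}) = 1"
    using p(3) by (simp add: psupp_proj_point)
next
  assume "proj_point p \<in> {proj_point (w + fscale c (unitv j'')) | w j'' c.
    (\<exists>Q\<in>{proj_point v0}. w \<in> Q) \<and> j'' \<in> {a, b} \<and> c \<noteq> 0}"
  then obtain w j'' c where h: "proj_point p = proj_point (w + fscale c (unitv j''))"
    "w \<in> proj_point v0" "j'' \<in> {a, b}" "c \<noteq> 0"
    by auto
  obtain e where e: "e \<noteq> 0" "p = fscale e (w + fscale c (unitv j''))"
    using proj_point_self[of p] h(1) by (auto simp: mem_proj_point_iff)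
  obtain m where m: "m \<noteq> 0" "w = fscale m v0"
    using h(2) by (auto simp: mem_proj_point_iff)
  have "v0 j'' = 0" using h(3) v0 by auto
  then have "p j'' \<noteq> 0" using e m h(4) by (simp add: unitv_apply)
  then have "j'' = j" using h(3) p(3) by (auto simp: supp_def)
  moreover have "p = fscale (e * m) (v0 + fscale (c / m) (unitv j''))"
    using e m by (simp add: fscale_def fun_eq_iff algebra_simps)
  ultimately have "on_v0_line j p"
    using e(1) m(1) h(4) unfolding on_v0_line_def
    by (intro exI[of _ "e * m"] exI[of _ "c / m"]) simp
  then show False using not_on_line by contradiction
qed

lemma in_M_or_on_v0_line:
  assumes p: "p \<in> vecs k" "p \<noteq> 0" and jj': "{j, j'} = {a, b}" "j \<noteq> j'" "p j' = 0"
  shows "proj_point p \<in> M \<or> on_v0_line j p"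
proof (cases "p j = 0")
  case True
  then show ?thesis
    using jj' in_M_if_zero_on_ab[OF p] by (auto simp: doubleton_eq_iff)
next
  case False
  then have "supp p \<inter> {a, b} = {j}"
    using jj' by (auto simp: supp_def doubleton_eq_iff)
  then show ?thesis
    using in_YT_if_not_on_v0_line[OF p] by (auto simp: M_def)
qed

lemma unitv_in_M:
  assumes i: "i \<in> {1..k}"
  shows "proj_point (unitv i) \<in> M"
proof (cases "i \<in> {a, b}")
  case False
  then show ?thesis
    using i by (intro in_M_if_zero_on_ab) (auto simp: unitv_in_vecs unitv_apply fun_eq_iff)
next
  case True
  then obtain i' where i': "{i, i'} = {a, b}" "i \<noteq> i'"
    using a_ne_b by auto
  obtain l where l: "v0 l \<noteq> 0" "l \<noteq> a" "l \<noteq> b" by (rule v0_outside)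
  have "\<not> on_v0_line i (unitv i)"
  proof
    assume "on_v0_line i (unitv i)"
    then obtain d c where "d \<noteq> 0" "unitv i = fscale d (v0 + fscale c (unitv i))"
      by (auto simp: on_v0_line_def)
    then have "unitv i l = d * v0 l" "unitv i l = (0::'a)"
      using l True by (auto simp: unitv_apply dest: fun_cong[of _ _ l])
    then show False using \<open>d \<noteq> 0\<close> l by simp
  qed
  moreover have "unitv i i' = (0::'a)"
    using i' by (simp add: unitv_apply)
  ultimately show ?thesis
    using in_M_or_on_v0_line[OF unitv_in_vecs[OF i] _ i'] by (auto simp: unitv_apply fun_eq_iff)
qed

lemma on_v0_line_not_in_M:
  assumes p: "on_v0_line j p" and j: "j \<in> {a, b}"
  shows "proj_point p \<notin> M"
proof
  assume in_M: "proj_point p \<in> M"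
  obtain d c where dc: "d \<noteq> 0" "c \<noteq> 0" "p = fscale d (v0 + fscale c (unitv j))"
    using p by (auto simp: on_v0_line_def)
  obtain l where l: "v0 l \<noteq> 0" "l \<noteq> a" "l \<noteq> b" by (rule v0_outside)
  have "p j \<noteq> 0" "p l \<noteq> 0"
    using dc l j v0 by (auto simp: unitv_apply)
  then have "proj_point p \<notin> XT k {a, b}" "proj_point p \<notin> ZT k {a, b}"
    using j l by (auto simp: XT_def ZT_def psupp_proj_point supp_def)
  moreover have "proj_point p = proj_point (v0 + fscale c (unitv j))"
    using dc by (intro proj_point_eq) (auto simp: mem_proj_point_iff)
  then have "proj_point p \<notin> YT k {a, b} {proj_point v0}"
    using dc j proj_point_self[of v0] unfolding YT_def by blast
  ultimately show False
    using in_M by (auto simp: M_def)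
qed

lemma supp_difference_on_v0_lines:
  assumes "on_v0_line b z" "on_v0_line a z'"
  obtains \<alpha> \<beta> where "supp (fscale \<alpha> z - fscale \<beta> z') = {a, b}"
proof -
  obtain d c d' c' where dc: "d \<noteq> 0" "c \<noteq> 0" "z = fscale d (v0 + fscale c (unitv b))"
    and dc': "d' \<noteq> 0" "c' \<noteq> 0" "z' = fscale d' (v0 + fscale c' (unitv a))"
    using assms unfolding on_v0_line_def by blast
  have "fscale (1 / d) z - fscale (1 / d') z' = fscale c (unitv b) - fscale c' (unitv a)"
    using dc dc' by (simp add: fun_eq_iff algebra_simps)
  then have "supp (fscale (1 / d) z - fscale (1 / d') z') = {a, b}"
    using dc dc' a_ne_b by (auto simp: supp_def unitv_apply)
  then show ?thesis by (rule that)
qed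

lemma line_meets_M:
  assumes xy: "x \<in> vecs k" "y \<in> vecs k" "x \<noteq> y" "vs.independent {x, y}"
  shows "\<exists>p\<in>vs.span {x, y}. p \<noteq> 0 \<and> proj_point p \<in> M"
proof -
  have span: "vs.span {x, y} \<subseteq> vecs k"
    using xy by (intro vs.span_minimal[OF _ subspace_vecs]) auto
  obtain z where z: "z \<in> vs.span {x, y}" "z \<noteq> 0" "z a = 0"
    using exists_zero_coordinate_in_span_pair[OF xy(4,3)] by blast
  obtain z' where z': "z' \<in> vs.span {x, y}" "z' \<noteq> 0" "z' b = 0"
    using exists_zero_coordinate_in_span_pair[OF xy(4,3)] by blast
  have "proj_point z \<in> M \<or> on_v0_line b z"
    using z span a_ne_b by (intro in_M_or_on_v0_line[of z b a]) (auto simp: insert_commute)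
  moreover have "proj_point z' \<in> M \<or> on_v0_line a z'"
    using z' span a_ne_b by (intro in_M_or_on_v0_line[of z' a b]) auto
  moreover have "\<exists>p\<in>vs.span {x, y}. p \<noteq> 0 \<and> proj_point p \<in> M"
    if on_lines: "on_v0_line b z" "on_v0_line a z'"
  proof -
    obtain \<alpha> \<beta> where supp: "supp (fscale \<alpha> z - fscale \<beta> z') = {a, b}"
      using supp_difference_on_v0_lines[OF on_lines] .
    have "fscale \<alpha> z - fscale \<beta> z' \<in> vs.span {x, y}"
      using z z' by (intro vs.span_diff vs.span_scale)
    moreover have "fscale \<alpha> z - fscale \<beta> z' \<noteq> 0"
    proof
      assume "fscale \<alpha> z - fscale \<beta> z' = 0"
      then have "supp (fscale \<alpha> z - fscale \<beta> z') = {}"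
        by (simp add: supp_def)
      then show False using supp by simp
    qed
    ultimately show ?thesis
      using supp span in_M_if_supp_ab by blast
  qed
  ultimately show ?thesis
    using z z' by blast
qed

end

lemma (in xyz_construction) enumerated_code_properties:
  fixes enum :: "nat \<Rightarrow> (nat \<Rightarrow> 'a) set" and rep :: "(nat \<Rightarrow> 'a) set \<Rightarrow> nat \<Rightarrow> 'a"
  assumes k: "3 \<le> k" and enum: "bij_betw enum {1..n} M" and rep: "\<forall>P\<in>M. rep P \<in> P"
  defines "C \<equiv> gen_code k n (\<lambda>j. rep (enum j))"
  shows "fsubspace C \<and> C \<subseteq> vecs n \<and> fdim C = k \<and> min_dist (dual_code n C) = 3
    \<and> covdim n C = enat (k - 1)"
proof -
  have enum_M: "enum j \<in> M" if "j \<in> {1..n}" for j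
    using that enum by (auto simp: bij_betw_def)
  have cols: "rep (enum j) \<in> enum j" "enum j \<in> PG k" if "j \<in> {1..n}" for j
    using enum_M[OF that] rep M_subset_PG by auto
  interpret projective_code k n "\<lambda>j. rep (enum j)"
    using PG_memE(1,2)[OF cols(2,1)] by unfold_locales auto
  have column_iff: "is_column v \<longleftrightarrow> proj_point v \<in> M" for v
    by (rule is_column_iff[OF enum cols(1) M_subset_PG])
  have inj: "inj_on encode (vecs k)"
    by (rule inj_on_encode) (simp add: column_iff unitv_in_M)
  have "inj_on (\<lambda>j. proj_point (rep (enum j))) {1..n} = inj_on enum {1..n}"
    by (rule inj_on_cong) (use PG_memE(3)[OF cols(2,1)] in auto)
  then have distinct: "inj_on (\<lambda>j. proj_point (rep (enum j))) {1..n}"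
    using bij_betw_imp_inj_on[OF enum] by simp
  have "supp (unitv a + unitv b :: nat \<Rightarrow> 'a) = {a, b}"
    using a_ne_b by (auto simp: supp_def unitv_apply split: if_splits)
  then have "is_column (unitv a + unitv b)"
    unfolding column_iff using a b
    by (intro in_M_if_supp_ab add_in_vecs unitv_in_vecs)
  then have min_dist: "min_dist (dual_code n (encode ` vecs k)) = 3"
    using min_dist_dual_eq_3[OF distinct a b a_ne_b] a b by (simp add: column_iff unitv_in_M)
  have lines: "\<exists>p\<in>vs.span {x, y}. p \<noteq> 0 \<and> is_column p"
    if "x \<in> vecs k" "y \<in> vecs k" "x \<noteq> y" "vs.independent {x, y}" for x y
    using line_meets_M[OF that] by (simp add: column_iff)
  \<comment> \<open>\<open>v0 + unitv a\<close> is a point outside \<open>M\<close> with \<open>a\<close>-coordinate 1.\<close>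
  have "on_v0_line a (v0 + unitv a)"
    unfolding on_v0_line_def by (intro exI[of _ 1]) simp
  then have "\<not> is_column (v0 + unitv a)"
    using on_v0_line_not_in_M by (simp add: column_iff)
  moreover have "v0 + unitv a \<in> vecs k" "(v0 + unitv a) a = 1"
    using v0 a by (simp_all add: add_in_vecs unitv_in_vecs unitv_apply)
  ultimately have "covdim n (encode ` vecs k) = enat (k - 1)"
    using covdim_eq[OF inj _ lines a] k by simp
  then show ?thesis
    using subspace_code code_subset_vecs dim_code[OF inj] min_dist
    by (simp add: C_def gen_code_eq)
qed

theorem mainTheorem18:
  fixes k n :: nat and T :: "nat set"
    and v1 :: "(nat \<Rightarrow> 'a::{field,finite}) set"
    and M :: "(nat \<Rightarrow> 'a) set set"
    and enum :: "nat \<Rightarrow> (nat \<Rightarrow> 'a) set"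
    and rep :: "(nat \<Rightarrow> 'a) set \<Rightarrow> (nat \<Rightarrow> 'a)"
    and C :: "(nat \<Rightarrow> 'a) set"
  assumes "k \<ge> 3"
    and "T \<subseteq> {1..k}" and "card T = 2"
    and "v1 \<in> PG k" and "psupp v1 \<inter> T = {}"
    and "M = XT k T \<union> YT k T {v1} \<union> ZT k T"
    and "n = card M"
    and "bij_betw enum {1..n} M"
    and "\<forall>P\<in>M. rep P \<in> P"
    and "C = gen_code k n (\<lambda>j. rep (enum j))"
  shows "fsubspace C \<and> C \<subseteq> vecs n \<and> fdim C = k
    \<and> min_dist (dual_code n C) = 3
    \<and> covdim n C = enat (k - 1)
    \<and> covdim n C = enat (k - min_dist (dual_code n C) + 2)"
proof -
  obtain a b where T: "T = {a, b}" "a \<noteq> b"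
    using assms(3) by (auto simp: card_2_iff)
  obtain v0 where v1: "v1 = proj_point v0" and v0: "v0 \<in> vecs k" "v0 \<noteq> 0"
    using assms(4) by (auto simp: PG_def)
  then have "v0 a = 0" "v0 b = 0"
    using assms(5) T(1) by (auto simp: psupp_proj_point supp_def)
  then interpret xyz_construction k a b v0
    using assms(2) T v0 by unfold_locales auto
  have "M = xyz_construction.M k a b v0"
    using assms(6) unfolding T(1) v1 M_def .
  then show ?thesis
    using enumerated_code_properties[of enum n rep] assms(1,8,9,10) by simp
qed

end
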